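(* Let $T=(V,E)$ be a tree rooted at $o$ with edge lengths $\ell:E\to\mathbb{R}_{>0}$ and let $F>0$. For any $X_1,X_2,X_3,X_4\subseteq V$, $$\mathrm{cost}(X_1\cup X_2\mid X_3)\le \mathrm{cost}(X_1)+\mathrm{cost}(X_2\mid X_3),$$ $$\mathrm{cost}(X_2\cup X_3)+\mathrm{cost}(X_1\mid X_2\cup X_3)+\mathrm{cost}(X_4\mid X_2\cup X_3)\le \mathrm{cost}(X_1\cup X_2)+\mathrm{cost}(X_3\cup X_4).$$
   Context: $V_v$ is the set of descendants of $v$ in $T$ (including $v$); for an edge $e=(u,v)$ with $v$ the child, $V_e=V_v$. For $X\subseteq V$, $\mathrm{mst}(X)$ is the total length of the minimal subtree of $T$ containing $X\cup\{o\}$, and $\mathrm{mst}_e(X)=\mathrm{mst}(V_e\cap X)$. $c(X,e)=\lceil \mathrm{mst}_e(X)/F\rceil$ for $e\in E$, $\mathrm{cost}(X)=2\sum_{e\in E}c(X,e)\ell(e)$. For $X,X'\subseteq V$ and $e\in E$: $c(X,e\mid X')=\lceil \mathrm{mst}_e(X)/F\rceil$ if $V_e\cap X'=\emptyset$, and $c(X,e\mid X')=\lfloor(\mathrm{mst}_e(X'\cup X)-\mathrm{mst}_e(X'))/F\rfloor$ otherwise; $\mathrm{cost}(X\mid X')=2\sum_{e\in E}c(X,e\mid X')\ell(e)$. *)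

theory Defs
  imports Complex_Main
begin

text \<open>A rooted tree on the finite vertex set V with root r is given by a parent
  function p: every vertex v \<noteq> r has parent p v \<in> V, p r = r, and every vertex
  reaches the root by iterating p. The edge of T with child v is (p v, v);
  hence edges are identified with their child endpoints, E = V - {r}.
  Edge lengths are given by l :: 'a \<Rightarrow> real on these child endpoints.\<close>

definition rooted_tree :: "'a set \<Rightarrow> 'a \<Rightarrow> ('a \<Rightarrow> 'a) \<Rightarrow> bool" where
  "rooted_tree V r p \<longleftrightarrow> finite V \<and> r \<in> V \<and> p r = r \<and>
     (\<forall>v\<in>V - {r}. p v \<in> V) \<and> (\<forall>v\<in>V. \<exists>n. (p ^^ n) v = r)"

definition tree_edges :: "'a set \<Rightarrow> 'a \<Rightarrow> 'a set" where
  "tree_edges V r = V - {r}"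

text \<open>V_v: descendants of v (including v); for the edge e with child v, V_e = V_v.\<close>
definition desc :: "'a set \<Rightarrow> ('a \<Rightarrow> 'a) \<Rightarrow> 'a \<Rightarrow> 'a set" where
  "desc V p v = {x \<in> V. \<exists>n. (p ^^ n) x = v}"

definition root_path_edges :: "'a set \<Rightarrow> 'a \<Rightarrow> ('a \<Rightarrow> 'a) \<Rightarrow> 'a \<Rightarrow> 'a set" where
  "root_path_edges V r p x = {v \<in> V - {r}. \<exists>n. (p ^^ n) x = v}"

text \<open>mst X: total length of the minimal subtree containing X \<union> {r}, i.e. of the
  union of all root-to-x paths, x \<in> X.\<close>
definition mst :: "'a set \<Rightarrow> 'a \<Rightarrow> ('a \<Rightarrow> 'a) \<Rightarrow> ('a \<Rightarrow> real) \<Rightarrow> 'a set \<Rightarrow> real" where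
  "mst V r p l X = (\<Sum>v \<in> (\<Union>x\<in>X. root_path_edges V r p x). l v)"

definition mst_e :: "'a set \<Rightarrow> 'a \<Rightarrow> ('a \<Rightarrow> 'a) \<Rightarrow> ('a \<Rightarrow> real) \<Rightarrow> 'a \<Rightarrow> 'a set \<Rightarrow> real" where
  "mst_e V r p l e X = mst V r p l (desc V p e \<inter> X)"

definition c :: "'a set \<Rightarrow> 'a \<Rightarrow> ('a \<Rightarrow> 'a) \<Rightarrow> ('a \<Rightarrow> real) \<Rightarrow> real \<Rightarrow> 'a set \<Rightarrow> 'a \<Rightarrow> int" where
  "c V r p l F X e = \<lceil>mst_e V r p l e X / F\<rceil>"

definition cost :: "'a set \<Rightarrow> 'a \<Rightarrow> ('a \<Rightarrow> 'a) \<Rightarrow> ('a \<Rightarrow> real) \<Rightarrow> real \<Rightarrow> 'a set \<Rightarrow> real" where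
  "cost V r p l F X = 2 * (\<Sum>e \<in> tree_edges V r. of_int (c V r p l F X e) * l e)"

definition c_cond :: "'a set \<Rightarrow> 'a \<Rightarrow> ('a \<Rightarrow> 'a) \<Rightarrow> ('a \<Rightarrow> real) \<Rightarrow> real \<Rightarrow> 'a set \<Rightarrow> 'a set \<Rightarrow> 'a \<Rightarrow> int" where
  "c_cond V r p l F X X' e =
     (if desc V p e \<inter> X' = {} then \<lceil>mst_e V r p l e X / F\<rceil>
      else \<lfloor>(mst_e V r p l e (X' \<union> X) - mst_e V r p l e X') / F\<rfloor>)"

definition cost_cond :: "'a set \<Rightarrow> 'a \<Rightarrow> ('a \<Rightarrow> 'a) \<Rightarrow> ('a \<Rightarrow> real) \<Rightarrow> real \<Rightarrow> 'a set \<Rightarrow> 'a set \<Rightarrow> real" where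
  "cost_cond V r p l F X X' = 2 * (\<Sum>e \<in> tree_edges V r. of_int (c_cond V r p l F X X' e) * l e)"

end

theory Submission
  imports Defs
begin

text \<open>Both inequalities hold edge by edge, before weighting by the edge lengths. For a fixed
  edge e the set function X \<mapsto> mst_e(X) is a coverage function (nonnegative weights summed
  over a union of root paths), so its marginal gains shrink as the base set grows. The real-valued
  forms of the per-edge inequalities are instances of this diminishing-returns property, and the
  rounding is absorbed by \<lfloor>x + y\<rfloor> \<le> \<lceil>x\<rceil> + \<lfloor>y\<rfloor> \<le> \<lceil>x + y\<rceil>.\<close>

lemma floor_add_le_ceiling_add_floor: "\<lfloor>x + y\<rfloor> \<le> \<lceil>x\<rceil> + \<lfloor>y\<rfloor>"
  for x y :: "'a::floor_ceiling"
proof -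
  have "\<lfloor>x + y\<rfloor> \<le> \<lfloor>of_int \<lceil>x\<rceil> + y\<rfloor>"
    by (intro floor_mono add_right_mono le_of_int_ceiling)
  also have "\<dots> = \<lceil>x\<rceil> + \<lfloor>y\<rfloor>"
    by (metis add.commute floor_add_int)
  finally show ?thesis .
qed

lemma ceiling_add_floor_le_ceiling_add: "\<lceil>x\<rceil> + \<lfloor>y\<rfloor> \<le> \<lceil>x + y\<rceil>"
  for x y :: "'a::floor_ceiling"
proof -
  have "\<lceil>x\<rceil> + \<lfloor>y\<rfloor> = \<lceil>x + of_int \<lfloor>y\<rfloor>\<rceil>"
    by simp
  also have "\<dots> \<le> \<lceil>x + y\<rceil>"
    by (intro ceiling_mono add_left_mono of_int_floor_le)
  finally show ?thesis .
qed

lemma sum_UN_marginal_antimono: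
  fixes w :: "'b \<Rightarrow> 'c::ordered_ab_group_add"
  assumes "finite G" and "\<And>x. P x \<subseteq> G" and "\<And>v. v \<in> G \<Longrightarrow> 0 \<le> w v" and "A \<subseteq> B"
  shows "sum w (\<Union>x\<in>B \<union> Z. P x) - sum w (\<Union>x\<in>B. P x)
       \<le> sum w (\<Union>x\<in>A \<union> Z. P x) - sum w (\<Union>x\<in>A. P x)"
proof -
  have fin: "finite (\<Union>x\<in>S. P x)" for S
    using assms(1,2) by (meson UN_least finite_subset)
  have gain: "sum w (\<Union>x\<in>S \<union> Z. P x) - sum w (\<Union>x\<in>S. P x)
            = sum w ((\<Union>x\<in>Z. P x) - (\<Union>x\<in>S. P x))" for S
  proof -
    have "(\<Union>x\<in>S \<union> Z. P x) = (\<Union>x\<in>S. P x) \<union> ((\<Union>x\<in>Z. P x) - (\<Union>x\<in>S. P x))"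
      by blast
    also have "sum w \<dots> = sum w (\<Union>x\<in>S. P x) + sum w ((\<Union>x\<in>Z. P x) - (\<Union>x\<in>S. P x))"
      using fin by (intro sum.union_disjoint) auto
    finally show ?thesis
      by simp
  qed
  have "sum w ((\<Union>x\<in>Z. P x) - (\<Union>x\<in>B. P x)) \<le> sum w ((\<Union>x\<in>Z. P x) - (\<Union>x\<in>A. P x))"
    using assms(2-4) fin by (intro sum_mono2) blast+
  then show ?thesis
    by (simp only: gain)
qed

lemma sum_of_int_mult_right_mono:
  fixes f g :: "'b \<Rightarrow> int" and w :: "'b \<Rightarrow> real"
  assumes "\<And>e. e \<in> E \<Longrightarrow> f e \<le> g e" and "\<And>e. e \<in> E \<Longrightarrow> 0 \<le> w e"
  shows "(\<Sum>e\<in>E. of_int (f e) * w e) \<le> (\<Sum>e\<in>E. of_int (g e) * w e)"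
  using assms by (intro sum_mono mult_right_mono) simp_all

lemma mst_empty [simp]: "mst V r p l {} = 0"
  by (simp add: mst_def)

lemma mst_e_eq_0: "desc V p e \<inter> X = {} \<Longrightarrow> mst_e V r p l e X = 0"
  by (simp add: mst_e_def)

lemma mst_e_Un_disjoint: "desc V p e \<inter> Y = {} \<Longrightarrow> mst_e V r p l e (X \<union> Y) = mst_e V r p l e X"
  by (simp add: mst_e_def Int_Un_distrib)

context
  fixes V :: "'a set" and r :: 'a and p :: "'a \<Rightarrow> 'a" and l :: "'a \<Rightarrow> real"
  assumes finite_V: "finite V"
    and l_nonneg: "\<And>e. e \<in> tree_edges V r \<Longrightarrow> 0 \<le> l e"
begin

lemma mst_marginal_antimono:
  assumes "A \<subseteq> B"
  shows "mst V r p l (B \<union> Z) - mst V r p l B \<le> mst V r p l (A \<union> Z) - mst V r p l A"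
  unfolding mst_def
proof (rule sum_UN_marginal_antimono)
  show "finite (tree_edges V r)"
    using finite_V by (simp add: tree_edges_def)
  show "root_path_edges V r p x \<subseteq> tree_edges V r" for x
    by (auto simp: root_path_edges_def tree_edges_def)
qed (use l_nonneg assms in auto)

lemma mst_subadditive: "mst V r p l (A \<union> B) \<le> mst V r p l A + mst V r p l B"
  using mst_marginal_antimono[of "{}" A B] by simp

lemma mst_e_marginal_antimono:
  assumes "A \<subseteq> B"
  shows "mst_e V r p l e (B \<union> Z) - mst_e V r p l e B \<le> mst_e V r p l e (A \<union> Z) - mst_e V r p l e A"
  using mst_marginal_antimono[of "desc V p e \<inter> A" "desc V p e \<inter> B" "desc V p e \<inter> Z"] assms
  by (auto simp: mst_e_def Int_Un_distrib)

lemma mst_e_subadditive: "mst_e V r p l e (A \<union> B) \<le> mst_e V r p l e A + mst_e V r p l e B"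
  using mst_subadditive by (simp add: mst_e_def Int_Un_distrib)

lemma c_cond_Un_le:
  assumes "F > 0"
  shows "c_cond V r p l F (X1 \<union> X2) X3 e \<le> c V r p l F X1 e + c_cond V r p l F X2 X3 e"
proof (cases "desc V p e \<inter> X3 = {}")
  case True
  let ?m = "\<lambda>X. mst_e V r p l e X / F"
  have "?m (X1 \<union> X2) \<le> ?m X1 + ?m X2"
    using mst_e_subadditive assms by (simp add: divide_right_mono flip: add_divide_distrib)
  then have "\<lceil>?m (X1 \<union> X2)\<rceil> \<le> \<lceil>?m X1 + ?m X2\<rceil>"
    by (rule ceiling_mono)
  also have "\<dots> \<le> \<lceil>?m X1\<rceil> + \<lceil>?m X2\<rceil>"
    by (rule ceiling_add_le)
  finally show ?thesis
    using True by (simp add: c_def c_cond_def)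
next
  case False
  let ?m = "mst_e V r p l e"
  let ?gain = "\<lambda>X. (?m (X3 \<union> X) - ?m X3) / F"
  have "?m (X3 \<union> X2 \<union> X1) - ?m (X3 \<union> X2) \<le> ?m ({} \<union> X1) - ?m {}"
    by (rule mst_e_marginal_antimono) auto
  then have "?gain (X1 \<union> X2) \<le> ?m X1 / F + ?gain X2"
    using assms by (simp add: mst_e_eq_0 Un_ac divide_right_mono flip: add_divide_distrib)
  then have "\<lfloor>?gain (X1 \<union> X2)\<rfloor> \<le> \<lfloor>?m X1 / F + ?gain X2\<rfloor>"
    by (rule floor_mono)
  also have "\<dots> \<le> \<lceil>?m X1 / F\<rceil> + \<lfloor>?gain X2\<rfloor>"
    by (rule floor_add_le_ceiling_add_floor)
  finally show ?thesis
    using False by (simp add: c_def c_cond_def)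
qed

lemma c_add_c_cond_le:
  assumes "F > 0"
  shows "c V r p l F (X2 \<union> X3) e + c_cond V r p l F X1 (X2 \<union> X3) e + c_cond V r p l F X4 (X2 \<union> X3) e
     \<le> c V r p l F (X1 \<union> X2) e + c V r p l F (X3 \<union> X4) e"
proof (cases "desc V p e \<inter> (X2 \<union> X3) = {}")
  case True
  then have "mst_e V r p l e (X1 \<union> X2) = mst_e V r p l e X1"
    and "mst_e V r p l e (X4 \<union> X3) = mst_e V r p l e X4"
    by (simp_all add: mst_e_Un_disjoint Int_Un_distrib)
  moreover have "X3 \<union> X4 = X4 \<union> X3"
    by blast
  ultimately show ?thesis
    using True by (simp add: c_def c_cond_def mst_e_eq_0)
next
  case False
  let ?m = "mst_e V r p l e"
  let ?gain = "\<lambda>X. (?m (X2 \<union> X3 \<union> X) - ?m (X2 \<union> X3)) / F"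
  have "?m (X2 \<union> X3 \<union> X1) - ?m (X2 \<union> X3) \<le> ?m (X2 \<union> X1) - ?m X2"
    by (rule mst_e_marginal_antimono) auto
  moreover have "?m (X3 \<union> X2 \<union> X4) - ?m (X3 \<union> X2) \<le> ?m (X3 \<union> X4) - ?m X3"
    by (rule mst_e_marginal_antimono) auto
  moreover have "?m (X2 \<union> X3) \<le> ?m X2 + ?m X3"
    by (rule mst_e_subadditive)
  ultimately have "?m (X2 \<union> X3) / F + (?gain X1 + ?gain X4) \<le> ?m (X1 \<union> X2) / F + ?m (X3 \<union> X4) / F"
    using assms by (simp add: Un_ac divide_right_mono flip: add_divide_distrib diff_divide_distrib)
  then have "\<lceil>?m (X2 \<union> X3) / F + (?gain X1 + ?gain X4)\<rceil> \<le> \<lceil>?m (X1 \<union> X2) / F + ?m (X3 \<union> X4) / F\<rceil>"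
    by (rule ceiling_mono)
  then have "\<lceil>?m (X2 \<union> X3) / F\<rceil> + \<lfloor>?gain X1 + ?gain X4\<rfloor> \<le> \<lceil>?m (X1 \<union> X2) / F\<rceil> + \<lceil>?m (X3 \<union> X4) / F\<rceil>"
    by (meson ceiling_add_floor_le_ceiling_add ceiling_add_le order_trans)
  moreover have "\<lfloor>?gain X1\<rfloor> + \<lfloor>?gain X4\<rfloor> \<le> \<lfloor>?gain X1 + ?gain X4\<rfloor>"
    by (rule le_floor_add)
  ultimately show ?thesis
    using False by (simp add: c_def c_cond_def)
qed

lemma cost_cond_Un_le:
  assumes "F > 0"
  shows "cost_cond V r p l F (X1 \<union> X2) X3 \<le> cost V r p l F X1 + cost_cond V r p l F X2 X3"
proof -
  have "(\<Sum>e\<in>tree_edges V r. of_int (c_cond V r p l F (X1 \<union> X2) X3 e) * l e)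
      \<le> (\<Sum>e\<in>tree_edges V r. of_int (c V r p l F X1 e + c_cond V r p l F X2 X3 e) * l e)"
    using c_cond_Un_le[OF assms] l_nonneg by (rule sum_of_int_mult_right_mono)
  then show ?thesis
    by (simp add: cost_def cost_cond_def distrib_right sum.distrib)
qed

lemma cost_add_cost_cond_le:
  assumes "F > 0"
  shows "cost V r p l F (X2 \<union> X3) + cost_cond V r p l F X1 (X2 \<union> X3) + cost_cond V r p l F X4 (X2 \<union> X3)
     \<le> cost V r p l F (X1 \<union> X2) + cost V r p l F (X3 \<union> X4)"
proof -
  have "(\<Sum>e\<in>tree_edges V r. of_int (c V r p l F (X2 \<union> X3) e + c_cond V r p l F X1 (X2 \<union> X3) e
                                      + c_cond V r p l F X4 (X2 \<union> X3) e) * l e)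
      \<le> (\<Sum>e\<in>tree_edges V r. of_int (c V r p l F (X1 \<union> X2) e + c V r p l F (X3 \<union> X4) e) * l e)"
    using c_add_c_cond_le[OF assms] l_nonneg by (rule sum_of_int_mult_right_mono)
  then show ?thesis
    by (simp add: cost_def cost_cond_def distrib_right sum.distrib)
qed

end

theorem lemma4p3:
  fixes V :: "'a set" and r :: 'a and p :: "'a \<Rightarrow> 'a" and l :: "'a \<Rightarrow> real" and F :: real
    and X1 X2 X3 X4 :: "'a set"
  assumes tree: "rooted_tree V r p"
    and lpos: "\<forall>e \<in> tree_edges V r. l e > 0"
    and Fpos: "F > 0"
    and X: "X1 \<subseteq> V" "X2 \<subseteq> V" "X3 \<subseteq> V" "X4 \<subseteq> V"
  shows "cost_cond V r p l F (X1 \<union> X2) X3 \<le> cost V r p l F X1 + cost_cond V r p l F X2 X3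
         \<and> cost V r p l F (X2 \<union> X3) + cost_cond V r p l F X1 (X2 \<union> X3) + cost_cond V r p l F X4 (X2 \<union> X3)
           \<le> cost V r p l F (X1 \<union> X2) + cost V r p l F (X3 \<union> X4)"
proof -
  have finite_V: "finite V"
    using tree by (simp add: rooted_tree_def)
  have l_nonneg: "\<And>e. e \<in> tree_edges V r \<Longrightarrow> 0 \<le> l e"
    using lpos by (simp add: less_imp_le)
  show ?thesis
    using cost_cond_Un_le[OF finite_V l_nonneg Fpos] cost_add_cost_cond_le[OF finite_V l_nonneg Fpos]
    by (rule conjI)
qed

end
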